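(* Let $G$ be a connected (bull, chair)-free graph. If $G$ has a maximal induced path on $\ell \ge 7$ vertices, then $\mathsf{lpt}(G) \le 2$.
   Context: All graphs are finite and simple. A chair is the graph obtained by subdividing one edge of the claw $K_{1,3}$ exactly once. A bull is the graph obtained from a four-vertex path by adding a vertex adjacent to exactly the two middle vertices of the path. A graph is (bull, chair)-free if it has no induced subgraph isomorphic to a bull or a chair. A maximal induced path is an induced path that is not contained in a strictly larger induced path (inclusion-wise). A longest path of a connected graph $G$ is a path of maximum length in $G$; a longest path transversal is a set of vertices meeting every longest path; $\mathsf{lpt}(G)$ is the minimum cardinality of a longest path transversal of $G$. *)

theory Defs
  imports Main
begin

definition graph :: "'a set \<Rightarrow> ('a \<Rightarrow> 'a \<Rightarrow> bool) \<Rightarrow> bool" where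
  "graph V E \<longleftrightarrow> finite V \<and> (\<forall>x y. E x y \<longrightarrow> E y x) \<and> (\<forall>x. \<not> E x x)
     \<and> (\<forall>x y. E x y \<longrightarrow> x \<in> V \<and> y \<in> V)"

text \<open>A path is a nonempty list of distinct vertices, consecutive ones adjacent.
  Its length (number of edges) is length p - 1.\<close>
definition is_path :: "'a set \<Rightarrow> ('a \<Rightarrow> 'a \<Rightarrow> bool) \<Rightarrow> 'a list \<Rightarrow> bool" where
  "is_path V E p \<longleftrightarrow> p \<noteq> [] \<and> distinct p \<and> set p \<subseteq> V
     \<and> (\<forall>i. Suc i < length p \<longrightarrow> E (p ! i) (p ! Suc i))"

definition connected_graph :: "'a set \<Rightarrow> ('a \<Rightarrow> 'a \<Rightarrow> bool) \<Rightarrow> bool" where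
  "connected_graph V E \<longleftrightarrow> V \<noteq> {} \<and>
     (\<forall>u\<in>V. \<forall>v\<in>V. \<exists>p. is_path V E p \<and> hd p = u \<and> last p = v)"

definition induced_path :: "'a set \<Rightarrow> ('a \<Rightarrow> 'a \<Rightarrow> bool) \<Rightarrow> 'a list \<Rightarrow> bool" where
  "induced_path V E p \<longleftrightarrow> is_path V E p
     \<and> (\<forall>i j. Suc i < j \<and> j < length p \<longrightarrow> \<not> E (p ! i) (p ! j))"

definition maximal_induced_path :: "'a set \<Rightarrow> ('a \<Rightarrow> 'a \<Rightarrow> bool) \<Rightarrow> 'a list \<Rightarrow> bool" where
  "maximal_induced_path V E p \<longleftrightarrow> induced_path V E p
     \<and> \<not> (\<exists>q. induced_path V E q \<and> set p \<subset> set q)"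

definition longest_path :: "'a set \<Rightarrow> ('a \<Rightarrow> 'a \<Rightarrow> bool) \<Rightarrow> 'a list \<Rightarrow> bool" where
  "longest_path V E p \<longleftrightarrow> is_path V E p \<and> (\<forall>q. is_path V E q \<longrightarrow> length q \<le> length p)"

definition lp_transversal :: "'a set \<Rightarrow> ('a \<Rightarrow> 'a \<Rightarrow> bool) \<Rightarrow> 'a set \<Rightarrow> bool" where
  "lp_transversal V E T \<longleftrightarrow> T \<subseteq> V \<and> (\<forall>p. longest_path V E p \<longrightarrow> T \<inter> set p \<noteq> {})"

definition lpt :: "'a set \<Rightarrow> ('a \<Rightarrow> 'a \<Rightarrow> bool) \<Rightarrow> nat" where
  "lpt V E = Min (card ` {T. lp_transversal V E T})"

definition has_induced :: "'a set \<Rightarrow> ('a \<Rightarrow> 'a \<Rightarrow> bool) \<Rightarrow> nat \<Rightarrow> (nat \<Rightarrow> nat \<Rightarrow> bool) \<Rightarrow> bool" where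
  "has_induced V E n H \<longleftrightarrow> (\<exists>f. inj_on f {0..<n} \<and> f ` {0..<n} \<subseteq> V
     \<and> (\<forall>i<n. \<forall>j<n. E (f i) (f j) \<longleftrightarrow> H i j))"

text \<open>Chair: claw with centre 0 and leaves 1,2,3, edge 0-3 subdivided by 4.\<close>
definition chair :: "nat \<Rightarrow> nat \<Rightarrow> bool" where
  "chair i j \<longleftrightarrow> (i, j) \<in> {(0,1),(1,0),(0,2),(2,0),(0,4),(4,0),(4,3),(3,4)}"

text \<open>Bull: path 0-1-2-3 plus vertex 4 adjacent to 1 and 2.\<close>
definition bull :: "nat \<Rightarrow> nat \<Rightarrow> bool" where
  "bull i j \<longleftrightarrow> (i, j) \<in> {(0,1),(1,0),(1,2),(2,1),(2,3),(3,2),(4,1),(1,4),(4,2),(2,4)}"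

definition bull_chair_free :: "'a set \<Rightarrow> ('a \<Rightarrow> 'a \<Rightarrow> bool) \<Rightarrow> bool" where
  "bull_chair_free V E \<longleftrightarrow> \<not> has_induced V E 5 bull \<and> \<not> has_induced V E 5 chair"

end

(*
  Let P be the maximal induced path. A vertex outside P sees all of P (it is complete), none of P
  (anticomplete), or is mixed. Forbidding bulls and chairs, together with the maximality of P,
  forces a mixed vertex to see exactly two consecutive vertices at one end of P, the two ends of P,
  or three consecutive vertices of P. Mixed vertices with the same contacts are adjacent, so P and
  the mixed vertices (the core) have a spanning path; moreover every vertex outside the core with a
  neighbour in the core is complete and hence adjacent to the whole core. A longest path meeting
  the core therefore contains all of it, since otherwise it could be rerouted along the spanning
  path and extended. A longest path avoiding the core consists of complete and anticomplete
  vertices, and the detours through the first two vertices of P show that it contains every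
  complete vertex with the largest number of anticomplete neighbours. Hence the first vertex of P
  and one such complete vertex meet every longest path.
*)

theory Submission
  imports Defs
begin

lemma successively_if_pairwise:
  "(\<And>x y. x \<in> set xs \<Longrightarrow> y \<in> set xs \<Longrightarrow> x \<noteq> y \<Longrightarrow> R x y) \<Longrightarrow> distinct xs \<Longrightarrow>
    successively R xs"
proof (induction xs)
  case (Cons a xs)
  then show ?case by (cases xs) (auto simp: successively_Cons)
qed simp

lemma successively_concat:
  assumes "\<And>xs. xs \<in> set xss \<Longrightarrow> successively R xs \<and> xs \<noteq> []"
    and "successively (\<lambda>xs ys. R (last xs) (hd ys)) xss"
  shows "successively R (concat xss)"
  using assms
proof (induction xss rule: induct_list012)
  case (3 xs ys zss)
  have "successively R (concat (ys # zss))" using "3.IH"(2) "3.prems" by simp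
  moreover have "hd (concat (ys # zss)) = hd ys" using "3.prems"(1)[of ys] by simp
  ultimately show ?case using "3.prems" by (auto simp: successively_append_iff)
qed simp_all

fun replace_members :: "'a set \<Rightarrow> 'a list \<Rightarrow> 'a list \<Rightarrow> 'a list" where
  "replace_members C hs [] = []"
| "replace_members C hs (x # xs) =
     (if x \<in> C then hd hs # replace_members C (tl hs) xs else x # replace_members C hs xs)"

lemma length_replace_members [simp]: "length (replace_members C hs xs) = length xs"
  by (induction xs arbitrary: hs) auto

lemma set_replace_members:
  "length (filter (\<lambda>x. x \<in> C) xs) \<le> length hs \<Longrightarrow>
     set (replace_members C hs xs) \<subseteq> (set xs - C) \<union> set hs"
proof (induction xs arbitrary: hs)
  case (Cons x xs)
  show ?case
  proof (cases "x \<in> C")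
    case True
    then obtain h hs' where "hs = h # hs'" using Cons.prems by (cases hs) auto
    then show ?thesis using Cons.prems Cons.IH[of hs'] True by auto
  next
    case False
    then show ?thesis using Cons.prems Cons.IH[of hs] by auto
  qed
qed simp

lemma distinct_replace_members:
  "distinct hs \<Longrightarrow> set hs \<subseteq> C \<Longrightarrow> distinct (filter (\<lambda>x. x \<notin> C) xs) \<Longrightarrow>
     length (filter (\<lambda>x. x \<in> C) xs) \<le> length hs \<Longrightarrow> distinct (replace_members C hs xs)"
proof (induction xs arbitrary: hs)
  case (Cons x xs)
  show ?case
  proof (cases "x \<in> C")
    case True
    then obtain h hs' where "hs = h # hs'" using Cons.prems(4) by (cases hs) auto
    then show ?thesis
      using Cons.prems Cons.IH[of hs'] True set_replace_members[of C xs hs'] by auto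
  next
    case False
    then show ?thesis using Cons.prems Cons.IH[of hs] set_replace_members[of C xs hs] by auto
  qed
qed simp

section \<open>Longest paths\<close>

lemma is_path_iff_successively:
  "is_path V E p \<longleftrightarrow> p \<noteq> [] \<and> distinct p \<and> set p \<subseteq> V \<and> successively E p"
  by (simp add: is_path_def successively_conv_nth)

lemma longest_path_length_ge: "longest_path V E Q \<Longrightarrow> is_path V E q \<Longrightarrow> length q \<le> length Q"
  by (simp add: longest_path_def)

lemma longest_path_contains_common_nbr:
  assumes Q: "longest_path V E (xs @ a # b # ys)" and y: "y \<in> V" "E a y" "E y b"
  shows "y \<in> set (xs @ a # b # ys)"
proof (rule ccontr)
  assume "y \<notin> set (xs @ a # b # ys)"
  then have "is_path V E (xs @ a # y # b # ys)"
    using Q y by (auto simp: longest_path_def is_path_iff_successively successively_append_iff)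
  from longest_path_length_ge[OF Q this] show False by simp
qed

lemma longest_path_contains_nbr_of_last:
  assumes Q: "longest_path V E (xs @ [a])" and y: "y \<in> V" "E a y"
  shows "y \<in> set (xs @ [a])"
proof (rule ccontr)
  assume "y \<notin> set (xs @ [a])"
  then have "is_path V E (xs @ [a, y])"
    using Q y by (auto simp: longest_path_def is_path_iff_successively successively_append_iff)
  from longest_path_length_ge[OF Q this] show False by simp
qed

lemma lpt_le_card:
  assumes "graph V E" "lp_transversal V E T"
  shows "lpt V E \<le> card T"
proof -
  have "{T. lp_transversal V E T} \<subseteq> Pow V" by (auto simp: lp_transversal_def)
  moreover have "finite V" using assms(1) by (simp add: graph_def)
  ultimately have "finite {T. lp_transversal V E T}" by (metis finite_Pow_iff finite_subset)
  then show ?thesis unfolding lpt_def using assms(2) by (intro Min_le) auto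
qed

locale simple_graph =
  fixes V :: "'a set" and E :: "'a \<Rightarrow> 'a \<Rightarrow> bool"
  assumes graph: "graph V E"
begin

lemma adj_commute: "E x y \<longleftrightarrow> E y x"
  using graph by (auto simp: graph_def)

lemma adj_sym: "E x y \<Longrightarrow> E y x"
  using adj_commute by blast

lemma not_adj_self: "\<not> E x x"
  using graph by (simp add: graph_def)

lemma adj_in_V: "E x y \<Longrightarrow> x \<in> V" "E x y \<Longrightarrow> y \<in> V"
  using graph by (simp_all add: graph_def)

lemma finite_V: "finite V"
  using graph by (simp add: graph_def)

lemma successively_replace_members:
  assumes "successively (\<lambda>x y. E x y \<or> x \<in> C \<and> y \<in> C) xs"
    and "successively E hs" "set hs \<subseteq> C" "length (filter (\<lambda>x. x \<in> C) xs) \<le> length hs"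
    and nbr: "\<And>y z. y \<in> C \<Longrightarrow> z \<notin> C \<Longrightarrow> E y z \<Longrightarrow> \<forall>c\<in>C. E z c"
  shows "successively E (replace_members C hs xs)"
  using assms(1-4)
proof (induction xs arbitrary: hs rule: induct_list012)
  case (3 x y xs)
  define hs' where "hs' = (if x \<in> C then tl hs else hs)"
  have "successively E (tl hs)" using "3.prems"(2) by (cases hs) (auto simp: successively_Cons)
  moreover have "set (tl hs) \<subseteq> set hs" by (cases hs) auto
  ultimately have hs': "successively E hs'" "set hs' \<subseteq> C"
    "length (filter (\<lambda>x. x \<in> C) (y # xs)) \<le> length hs'"
    using "3.prems"(2-4) by (auto simp: hs'_def)
  have "E (if x \<in> C then hd hs else x) (if y \<in> C then hd hs' else y)"
  proof -
    have xy: "E x y \<or> x \<in> C \<and> y \<in> C" using "3.prems"(1) by simp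
    consider (CC) "x \<in> C" "y \<in> C" | (CO) "x \<in> C" "y \<notin> C" | (OC) "x \<notin> C" "y \<in> C"
      | (OO) "x \<notin> C" "y \<notin> C" by blast
    then show ?thesis
    proof cases
      case CC
      then obtain h1 h2 hs'' where "hs = h1 # h2 # hs''"
        using "3.prems"(4) by (cases hs; cases "tl hs") auto
      then show ?thesis using CC "3.prems"(2) by (simp add: hs'_def)
    next
      case CO
      then have "hd hs \<in> C" using "3.prems"(3,4) by (cases hs) auto
      moreover have "E x y" using CO xy by blast
      ultimately have "E y (hd hs)" using CO nbr[of x y] by blast
      then show ?thesis using CO by (simp add: hs'_def adj_sym)
    next
      case OC
      then have "hd hs' \<in> C" using hs'(2,3) by (cases hs') auto
      moreover have "E y x" using OC xy adj_sym by blast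
      ultimately have "E x (hd hs')" using OC nbr[of y x] by blast
      then show ?thesis using OC by simp
    next
      case OO
      then show ?thesis using xy by simp
    qed
  qed
  moreover have "successively E (replace_members C hs' (y # xs))"
    using "3.IH"(2) "3.prems"(1) hs' by simp
  ultimately show ?case by (auto simp: hs'_def)
qed simp_all

lemma longest_path_contains_traceable_set:
  assumes Q: "longest_path V E Q" and H: "is_path V E H" and meet: "set Q \<inter> set H \<noteq> {}"
    and nbr: "\<And>y z. y \<in> set H \<Longrightarrow> z \<notin> set H \<Longrightarrow> E y z \<Longrightarrow> \<forall>c\<in>set H. E z c"
  shows "set H \<subseteq> set Q"
proof (rule ccontr)
  assume missing: "\<not> set H \<subseteq> set Q"
  \<comment> \<open>Doubling the last vertex of Q in set H and then replacing the vertices of set H, in order,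
    by those of H produces a path with one more vertex.\<close>
  let ?C = "set H"
  have Qp: "is_path V E Q" using Q by (simp add: longest_path_def)
  obtain A x B where Q_eq: "Q = A @ x # B" and x: "x \<in> ?C" and B: "\<forall>b\<in>set B. b \<notin> ?C"
    using meet split_list_last_prop[of Q "\<lambda>y. y \<in> ?C"] by blast
  define Q' where "Q' = A @ x # x # B"
  have "length (filter (\<lambda>y. y \<in> ?C) Q) = card (set Q \<inter> ?C)"
    using Qp distinct_card[of "filter (\<lambda>y. y \<in> ?C) Q"] by (simp add: is_path_def Int_def)
  also have "\<dots> < card ?C"
    using missing by (intro psubset_card_mono) auto
  also have "\<dots> = length H"
    using H by (simp add: is_path_def distinct_card)
  finally have count: "length (filter (\<lambda>y. y \<in> ?C) Q') \<le> length H"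
    using x by (simp add: Q_eq Q'_def)
  have "successively (\<lambda>a b. E a b \<or> a \<in> ?C \<and> b \<in> ?C) Q"
    using Qp by (auto simp: is_path_iff_successively elim: successively_mono)
  then have "successively (\<lambda>a b. E a b \<or> a \<in> ?C \<and> b \<in> ?C) Q'"
    using x by (simp add: Q_eq Q'_def successively_append_iff)
  then have "successively E (replace_members ?C H Q')"
    using H count nbr by (intro successively_replace_members) (auto simp: is_path_iff_successively)
  moreover have "distinct (replace_members ?C H Q')"
    using H Qp count x by (intro distinct_replace_members) (auto simp: is_path_def Q_eq Q'_def)
  moreover have "set (replace_members ?C H Q') \<subseteq> V"
    using set_replace_members[OF count] Qp H x by (auto simp: is_path_def Q_eq Q'_def)
  moreover have "replace_members ?C H Q' \<noteq> []"
    by (metis length_replace_members Q'_def Nil_is_append_conv list.distinct(1) length_0_conv)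
  ultimately have "is_path V E (replace_members ?C H Q')"
    by (simp add: is_path_iff_successively)
  then have "length (replace_members ?C H Q') \<le> length Q"
    by (rule longest_path_length_ge[OF Q])
  then show False by (simp add: Q_eq Q'_def)
qed

lemma induced_path_rev:
  assumes "induced_path V E p"
  shows "induced_path V E (rev p)"
  unfolding induced_path_def
proof (intro conjI allI impI)
  show "is_path V E (rev p)"
    using assms by (auto simp: induced_path_def is_path_iff_successively adj_commute)
  fix i j assume ij: "Suc i < j \<and> j < length (rev p)"
  then have "Suc (length p - Suc j) < length p - Suc i" "length p - Suc i < length p" by auto
  then have "\<not> E (p ! (length p - Suc j)) (p ! (length p - Suc i))"
    using assms by (simp add: induced_path_def)
  then show "\<not> E (rev p ! i) (rev p ! j)" using ij by (simp add: rev_nth adj_commute)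
qed

lemma maximal_induced_path_rev:
  "maximal_induced_path V E p \<Longrightarrow> maximal_induced_path V E (rev p)"
  by (simp add: maximal_induced_path_def induced_path_rev)

end

locale bull_chair_free_graph = simple_graph +
  assumes bull_chair_free: "bull_chair_free V E"
begin

lemma no_induced_chair:
  assumes "E z a" "E z b" "E z m" "E m t"
    and "\<not> E z t" "\<not> E a b" "\<not> E a t" "\<not> E a m" "\<not> E b t" "\<not> E b m" "z \<noteq> t" "a \<noteq> b"
  shows False
proof -
  let ?f = "\<lambda>i. [z, a, b, t, m] ! i"
  have "distinct [z, a, b, t, m]" using assms not_adj_self adj_sym by auto
  then have "inj_on ?f {0..<5}" by (simp add: inj_on_nth)
  moreover have "?f ` {0..<5} \<subseteq> V"
    using assms adj_in_V adj_sym by (auto simp: less_Suc_eq numeral_eq_Suc)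
  moreover have "\<forall>i<5. \<forall>j<5. E (?f i) (?f j) \<longleftrightarrow> chair i j"
    using assms not_adj_self by (auto simp: less_Suc_eq numeral_eq_Suc chair_def adj_commute)
  ultimately have "has_induced V E 5 chair" unfolding has_induced_def by blast
  with bull_chair_free show False by (simp add: bull_chair_free_def)
qed

lemma no_induced_bull:
  assumes "E a b" "E b c" "E c d" "E h b" "E h c"
    and "\<not> E a c" "\<not> E a d" "\<not> E a h" "\<not> E b d" "\<not> E d h"
  shows False
proof -
  let ?f = "\<lambda>i. [a, b, c, d, h] ! i"
  have "distinct [a, b, c, d, h]" using assms not_adj_self adj_sym by auto
  then have "inj_on ?f {0..<5}" by (simp add: inj_on_nth)
  moreover have "?f ` {0..<5} \<subseteq> V"
    using assms adj_in_V adj_sym by (auto simp: less_Suc_eq numeral_eq_Suc)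
  moreover have "\<forall>i<5. \<forall>j<5. E (?f i) (?f j) \<longleftrightarrow> bull i j"
    using assms not_adj_self by (auto simp: less_Suc_eq numeral_eq_Suc bull_def adj_commute)
  ultimately have "has_induced V E 5 bull" unfolding has_induced_def by blast
  with bull_chair_free show False by (simp add: bull_chair_free_def)
qed

end

section \<open>Contacts of outside vertices with the maximal induced path\<close>

locale long_maximal_induced_path = bull_chair_free_graph +
  fixes P :: "'a list"
  assumes maximal: "maximal_induced_path V E P" and long: "7 \<le> length P"
begin

abbreviation "l \<equiv> length P"

lemma induced_path_P: "induced_path V E P"
  using maximal by (simp add: maximal_induced_path_def)

lemma P_adj: "i < l \<Longrightarrow> j < l \<Longrightarrow> j = Suc i \<or> i = Suc j \<Longrightarrow> E (P ! i) (P ! j)"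
  using induced_path_P adj_sym by (auto simp: induced_path_def is_path_def)

lemma P_not_adj: "i < l \<Longrightarrow> j < l \<Longrightarrow> i + 2 \<le> j \<or> j + 2 \<le> i \<Longrightarrow> \<not> E (P ! i) (P ! j)"
  using induced_path_P adj_sym unfolding induced_path_def
  by (metis add_2_eq_Suc' less_eq_Suc_le)

lemma P_nth_eq_iff: "i < l \<Longrightarrow> j < l \<Longrightarrow> P ! i = P ! j \<longleftrightarrow> i = j"
  using induced_path_P by (simp add: induced_path_def is_path_def nth_eq_iff_index_eq)

lemma P_not_Nil [simp]: "P \<noteq> []"
  using long by auto

lemma P_nth_in_V: "i < l \<Longrightarrow> P ! i \<in> V"
  using induced_path_P by (auto simp: induced_path_def is_path_def)

lemma rev_long_maximal_induced_path: "long_maximal_induced_path V E (rev P)"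
  using maximal long maximal_induced_path_rev by unfold_locales simp_all

definition contacts :: "'a \<Rightarrow> nat set" where
  "contacts v = {i. i < l \<and> E v (P ! i)}"

lemma finite_contacts: "finite (contacts v)"
  by (simp add: contacts_def)

lemma contacts_iff: "i < l \<Longrightarrow> E v (P ! i) \<longleftrightarrow> i \<in> contacts v"
  by (simp add: contacts_def)

text \<open>Reversing P reflects the positions of contacts; the mirror images of the lemmas below are
  obtained this way.\<close>

lemma contacts_rev:
  "contacts v = (\<lambda>i. l - 1 - i) ` long_maximal_induced_path.contacts E (rev P) v"
proof -
  interpret rev: long_maximal_induced_path V E "rev P" by (rule rev_long_maximal_induced_path)
  show ?thesis
  proof (intro set_eqI iffI)
    fix i assume "i \<in> contacts v"
    then show "i \<in> (\<lambda>i. l - 1 - i) ` rev.contacts v"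
      by (intro image_eqI[of _ _ "l - 1 - i"]) (auto simp: contacts_def rev.contacts_def rev_nth)
  qed (auto simp: contacts_def rev.contacts_def rev_nth)
qed

lemma contacts_neq_first_only:
  assumes v: "v \<notin> set P"
  shows "contacts v \<noteq> {0}"
proof
  assume only_first: "contacts v = {0}"
  have "0 \<in> contacts v" by (simp add: only_first)
  then have v0: "E v (P ! 0)" by (simp add: contacts_def)
  have others: "\<not> E v (P ! i)" if "0 < i" "i < l" for i
  proof -
    have "i \<notin> contacts v" using that by (simp add: only_first)
    then show ?thesis using that by (simp add: contacts_def)
  qed
  have "is_path V E (v # P)"
    unfolding is_path_def
  proof (intro conjI allI impI)
    show "distinct (v # P)" "set (v # P) \<subseteq> V"
      using v induced_path_P adj_in_V(1)[OF v0] by (auto simp: induced_path_def is_path_def)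
    fix i assume "Suc i < length (v # P)"
    then show "E ((v # P) ! i) ((v # P) ! Suc i)" using v0 by (cases i) (auto intro: P_adj)
  qed simp
  moreover have "\<not> E ((v # P) ! i) ((v # P) ! j)" if ij: "Suc i < j" "j < length (v # P)" for i j
  proof -
    obtain j' where j: "j = Suc j'" using ij by (cases j) auto
    show ?thesis
    proof (cases i)
      case 0
      then show ?thesis using ij j others[of j'] by simp
    next
      case (Suc i')
      then show ?thesis using ij j P_not_adj[of i' j'] by simp
    qed
  qed
  ultimately have "induced_path V E (v # P)" by (simp add: induced_path_def)
  moreover have "set P \<subset> set (v # P)" using v by auto
  ultimately show False using maximal unfolding maximal_induced_path_def by blast
qed

lemma chair_forces_contact:
  assumes v: "v \<notin> set P" and idx: "k < l" "j < l" "m < l" "t < l"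
    "j = Suc k \<or> k = Suc j" "m = Suc j \<or> j = Suc m" "t = Suc m \<or> m = Suc t" "k \<noteq> m" "t \<noteq> j"
    and "E v (P ! j)" "\<not> E v (P ! m)" "\<not> E v (P ! t)"
  shows "E v (P ! k)"
proof (rule ccontr)
  assume "\<not> E v (P ! k)"
  have "E (P ! j) (P ! k)" "E (P ! j) (P ! m)" "E (P ! m) (P ! t)"
    using idx by (auto intro: P_adj)
  moreover have "\<not> E (P ! j) (P ! t)" "\<not> E (P ! k) (P ! t)" "\<not> E (P ! k) (P ! m)" "P ! j \<noteq> P ! t"
    using idx P_not_adj[of j t] P_not_adj[of k t] P_not_adj[of k m] by (auto simp: P_nth_eq_iff)
  moreover have "P ! k \<noteq> v" using v idx by auto
  ultimately show False
    using assms(11-) \<open>\<not> E v (P ! k)\<close>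
    by (intro no_induced_chair[of "P ! j" "P ! k" v "P ! m" "P ! t"]) (simp_all add: adj_commute)
qed

lemma bull_forces_contact:
  assumes v: "v \<notin> set P" and idx: "k < l" "j < l" "m < l" "t < l"
    "j = Suc k \<or> k = Suc j" "m = Suc j \<or> j = Suc m" "t = Suc m \<or> m = Suc t" "k \<noteq> m" "t \<noteq> j"
    and "E v (P ! j)" "E v (P ! m)" "\<not> E v (P ! t)"
  shows "E v (P ! k)"
proof (rule ccontr)
  assume "\<not> E v (P ! k)"
  have "E (P ! k) (P ! j)" "E (P ! j) (P ! m)" "E (P ! m) (P ! t)"
    using idx by (auto intro: P_adj)
  moreover have "\<not> E (P ! k) (P ! m)" "\<not> E (P ! k) (P ! t)" "\<not> E (P ! j) (P ! t)"
    using idx P_not_adj[of k m] P_not_adj[of k t] P_not_adj[of j t] by auto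
  ultimately show False
    using assms(11-) \<open>\<not> E v (P ! k)\<close>
    by (intro no_induced_bull[of "P ! k" "P ! j" "P ! m" "P ! t" v]) (simp_all add: adj_commute)
qed

lemma bull_forbids_far_contact:
  assumes v: "v \<notin> set P" and idx: "k < l" "j < l" "m < l" "t < l"
    "m = Suc j \<or> j = Suc m" "t = Suc m \<or> m = Suc t" "t \<noteq> j"
    "k + 2 \<le> j \<and> k + 2 \<le> m \<and> k + 2 \<le> t \<or> j + 2 \<le> k \<and> m + 2 \<le> k \<and> t + 2 \<le> k"
    and "E v (P ! j)" "E v (P ! m)" "\<not> E v (P ! t)"
  shows "\<not> E v (P ! k)"
proof
  assume "E v (P ! k)"
  have "E (P ! m) (P ! t)" "E (P ! j) (P ! m)"
    using idx by (auto intro: P_adj)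
  moreover have "\<not> E (P ! k) (P ! m)" "\<not> E (P ! k) (P ! t)" "\<not> E (P ! k) (P ! j)"
    "\<not> E (P ! t) (P ! j)"
    using idx P_not_adj[of k m] P_not_adj[of k t] P_not_adj[of k j] P_not_adj[of t j] by auto
  ultimately show False
    using assms(10-) \<open>E v (P ! k)\<close>
    by (intro no_induced_bull[of "P ! k" v "P ! m" "P ! t" "P ! j"]) (simp_all add: adj_commute)
qed

lemma far_contacts_force_contact:
  assumes v: "v \<notin> set P" and idx: "x < l" "y < l" "m < l" "t < l" "t = Suc m \<or> m = Suc t"
    "x + 2 \<le> y \<or> y + 2 \<le> x"
    "x + 2 \<le> m \<and> x + 2 \<le> t \<or> m + 2 \<le> x \<and> t + 2 \<le> x"
    "y + 2 \<le> m \<and> y + 2 \<le> t \<or> m + 2 \<le> y \<and> t + 2 \<le> y"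
    and "E v (P ! x)" "E v (P ! y)" "E v (P ! m)"
  shows "E v (P ! t)"
proof (rule ccontr)
  assume "\<not> E v (P ! t)"
  have "E (P ! m) (P ! t)" using idx by (auto intro: P_adj)
  moreover have "\<not> E (P ! x) (P ! y)" "\<not> E (P ! x) (P ! t)" "\<not> E (P ! x) (P ! m)"
    "\<not> E (P ! y) (P ! t)" "\<not> E (P ! y) (P ! m)" "P ! x \<noteq> P ! y"
    using idx P_not_adj[of x y] P_not_adj[of x t] P_not_adj[of x m] P_not_adj[of y t] P_not_adj[of y m] by (auto simp: P_nth_eq_iff)
  moreover have "v \<noteq> P ! t" using v idx by auto
  ultimately show False
    using assms(10-) \<open>\<not> E v (P ! t)\<close>
    by (intro no_induced_chair[of v "P ! x" "P ! y" "P ! m" "P ! t"]) (simp_all add: adj_commute)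
qed

lemma contacts_eq_triple:
  assumes v: "v \<notin> set P" and below: "\<forall>i\<in>contacts v. i \<le> m + 2" and m: "m + 3 < l"
    and "E v (P ! m)" "E v (P ! (m + 1))" "E v (P ! (m + 2))" "\<not> E v (P ! (m + 3))"
  shows "contacts v = {m, Suc m, Suc (Suc m)}"
proof
  show "{m, Suc m, Suc (Suc m)} \<subseteq> contacts v" using assms(3-) by (simp add: contacts_def)
  show "contacts v \<subseteq> {m, Suc m, Suc (Suc m)}"
  proof
    fix i assume i: "i \<in> contacts v"
    then have vi: "i < l" "E v (P ! i)" by (simp_all add: contacts_def)
    have "i + 1 \<noteq> m"
    proof
      assume "i + 1 = m"
      then show False
        using bull_forbids_far_contact[OF v, of i "m + 1" "m + 2" "m + 3"] vi m assms(5-) by simp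
    qed
    moreover have "\<not> i + 2 \<le> m"
    proof
      assume "i + 2 \<le> m"
      then show False
        using far_contacts_force_contact[OF v, of i m "m + 2" "m + 3"] vi m assms(4,6,7) by simp
    qed
    moreover have "i \<le> m + 2" using below i by blast
    ultimately show "i \<in> {m, Suc m, Suc (Suc m)}" by auto
  qed
qed

lemma contacts_cases_away_from_end:
  assumes v: "v \<notin> set P" and ne: "contacts v \<noteq> {}" and away: "\<forall>i\<in>contacts v. i + 3 \<le> l"
  shows "contacts v = {0, 1} \<or> (\<exists>m. m + 5 \<le> l \<and> contacts v = {m, Suc m, Suc (Suc m)})"
proof -
  define M where "M = Max (contacts v)"
  have M: "M \<in> contacts v" "\<And>i. i \<in> contacts v \<Longrightarrow> i \<le> M"
    using ne finite_contacts by (simp_all add: M_def)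
  have vM: "E v (P ! M)" "M + 3 \<le> l" using M(1) away by (auto simp: contacts_def)
  have after: "\<not> E v (P ! (M + 1))" "\<not> E v (P ! (M + 2))"
    using M(2)[of "M + 1"] M(2)[of "M + 2"] vM(2) by (auto simp: contacts_def)
  have "M \<noteq> 0"
  proof
    assume "M = 0"
    then have "contacts v \<subseteq> {0}" using M(2) by blast
    then have "contacts v = {0}" using ne by blast
    then show False using contacts_neq_first_only[OF v] by simp
  qed
  then obtain a where a: "M = Suc a" using not0_implies_Suc by blast
  have va: "E v (P ! a)"
    using chair_forces_contact[OF v, of a M "M + 1" "M + 2"] a vM after by simp
  show ?thesis
  proof (cases a)
    case 0
    have "contacts v \<subseteq> {0, 1}"
    proof
      fix i assume "i \<in> contacts v"
      then have "i \<le> 1" using M(2) a 0 by fastforce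
      then show "i \<in> {0, 1}" by auto
    qed
    moreover have "{0, 1} \<subseteq> contacts v" using va vM a 0 by (auto simp: contacts_def)
    ultimately have "contacts v = {0, 1}" by blast
    then show ?thesis ..
  next
    case (Suc b)
    have "E v (P ! b)"
      using bull_forces_contact[OF v, of b a M "M + 1"] a Suc vM after va by simp
    moreover have "\<forall>i\<in>contacts v. i \<le> b + 2"
    proof
      fix i assume "i \<in> contacts v"
      then show "i \<le> b + 2" using M(2)[of i] a Suc by simp
    qed
    ultimately have "contacts v = {b, Suc b, Suc (Suc b)}"
      using contacts_eq_triple[OF v, of b] a Suc vM after va by (simp add: eval_nat_numeral)
    moreover have "b + 5 \<le> l" using vM a Suc by simp
    ultimately show ?thesis by blast
  qed
qed

lemma start_not_contact_if_second_last_not_last: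
  assumes v: "v \<notin> set P" and second_last: "E v (P ! (l - 2))" and last: "\<not> E v (P ! (l - 1))"
    and m: "m \<le> 1"
  shows "\<not> E v (P ! m)"
proof
  assume vm: "E v (P ! m)"
  obtain n where n: "l = n + 7" using long by (metis add.commute le_Suc_ex)
  have ends: "E v (P ! (n + 5))" "\<not> E v (P ! (n + 6))"
    using second_last last n by (simp_all add: numeral_eq_Suc)
  have n3: "\<not> E v (P ! (n + 3))"
    using far_contacts_force_contact[OF v, of m "n + 3" "n + 5" "n + 6"] vm ends n m by auto
  have n4: "E v (P ! (n + 4))"
    using chair_forces_contact[OF v, of "n + 6" "n + 5" "n + 4" "n + 3"] n3 ends n by auto
  show False
    using bull_forces_contact[OF v, of "n + 3" "n + 4" "n + 5" "n + 6"] n3 n4 ends n by simp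
qed

lemma complete_if_contacts_first_two_and_last:
  assumes v: "v \<notin> set P" and a: "E v (P ! 0)" "E v (P ! 1)" "E v (P ! (l - 1))"
  shows "\<forall>i<l. E v (P ! i)"
proof (rule ccontr)
  assume "\<not> (\<forall>i<l. E v (P ! i))"
  then have ex: "\<exists>i. i < l \<and> \<not> E v (P ! i)" by blast
  define j where "j = (LEAST i. i < l \<and> \<not> E v (P ! i))"
  have j: "j < l" "\<not> E v (P ! j)" using LeastI_ex[OF ex] by (simp_all add: j_def)
  have before: "\<And>i. i < j \<Longrightarrow> E v (P ! i)" using not_less_Least j(1) j_def by fastforce
  obtain n where n: "l = n + 7" using long by (metis add.commute le_Suc_ex)
  have last: "E v (P ! (n + 6))" using a(3) n by (simp add: add.commute)
  have "2 \<le> j" using j a by (metis One_nat_def less_2_cases not_le)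
  moreover have "j \<noteq> n + 6" using j(2) last by auto
  ultimately have j_range: "2 \<le> j" "j < n + 6" using j(1) n by simp_all
  then obtain i where i: "j = i + 2" by (metis add.commute le_Suc_ex)
  show False
  proof (cases "i < 2")
    case True
    show False
      using bull_forbids_far_contact[OF v, of "n + 6" i "i + 1" "i + 2"] j_range j last before True n i
      by simp
  next
    case False
    then obtain t where t: "i = t + 2" by (metis add.commute le_Suc_ex not_less)
    show False
      using bull_forbids_far_contact[OF v, of t i "i + 1" "i + 2"] j j_range before n i t
      by simp
  qed
qed

lemma contacts_eq_ends:
  assumes v: "v \<notin> set P" and a: "E v (P ! 0)" "E v (P ! (l - 1))"
    and b: "\<not> E v (P ! 1)" "\<not> E v (P ! (l - 2))"
  shows "contacts v = {0, l - 1}"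
proof -
  obtain n where n: "l = n + 7" using long by (metis add.commute le_Suc_ex)
  have ends: "E v (P ! (n + 6))" "\<not> E v (P ! (n + 5))"
    using a(2) b(2) n by (simp_all add: add.commute)
  have inner: "\<not> E v (P ! k)" if k: "0 < k" "k < n + 6" for k
  proof
    assume vk: "E v (P ! k)"
    consider "k = 1" | "k = 2" | "3 \<le> k" "k \<le> n + 4" | "k = n + 5" using k by linarith
    then show False
    proof cases
      case 2
      then show False
        using far_contacts_force_contact[OF v, of 2 0 "n + 6" "n + 5"] vk a ends n by simp
    next
      case 3
      then show False
        using far_contacts_force_contact[OF v, of k "n + 6" 0 1] vk a b(1) ends n by simp
    qed (use vk b ends in simp_all)
  qed
  have "i = 0 \<or> i = l - 1" if "i \<in> contacts v" for i
  proof (rule ccontr)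
    assume "\<not> (i = 0 \<or> i = l - 1)"
    moreover have "i < l" "E v (P ! i)" using that by (simp_all add: contacts_def)
    ultimately have "0 < i" "i < n + 6" using n by linarith+
    then show False using inner \<open>E v (P ! i)\<close> by blast
  qed
  moreover have "{0, l - 1} \<subseteq> contacts v" using a n by (simp add: contacts_def)
  ultimately show ?thesis by blast
qed

lemma contacts_cases_away_from_start:
  assumes v: "v \<notin> set P" and ne: "contacts v \<noteq> {}" and away: "\<forall>i\<in>contacts v. 2 \<le> i"
  shows "contacts v = {l - 2, l - 1} \<or> (\<exists>m. m + 2 < l \<and> contacts v = {m, Suc m, Suc (Suc m)})"
proof -
  interpret rev: long_maximal_induced_path V E "rev P" by (rule rev_long_maximal_induced_path)
  have rev_mem: "i \<in> rev.contacts v \<longleftrightarrow> i < l \<and> l - 1 - i \<in> contacts v" for i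
    by (auto simp: contacts_def rev.contacts_def rev_nth)
  have rev_ne: "rev.contacts v \<noteq> {}"
  proof -
    obtain i where "i \<in> contacts v" using ne by blast
    then have "l - 1 - i \<in> rev.contacts v" by (auto simp: rev_mem contacts_def)
    then show ?thesis by blast
  qed
  have rev_away: "\<forall>i\<in>rev.contacts v. i + 3 \<le> l"
  proof
    fix i assume "i \<in> rev.contacts v"
    then have "i < l" "l - 1 - i \<in> contacts v" using rev_mem by simp_all
    moreover have "2 \<le> l - 1 - i" using away calculation(2) by blast
    ultimately show "i + 3 \<le> l" by linarith
  qed
  have "rev.contacts v = {0, 1} \<or> (\<exists>m. m + 5 \<le> l \<and> rev.contacts v = {m, Suc m, Suc (Suc m)})"
    using rev.contacts_cases_away_from_end[of v] v rev_ne rev_away by simp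
  then show ?thesis
  proof (elim disjE exE conjE)
    assume "rev.contacts v = {0, 1}"
    then have "contacts v = {l - 2, l - 1}" using contacts_rev[of v] by (auto simp: numeral_2_eq_2)
    then show ?thesis by blast
  next
    fix m assume m: "m + 5 \<le> l" "rev.contacts v = {m, Suc m, Suc (Suc m)}"
    then obtain n where n: "l = m + 5 + n" using le_Suc_ex by blast
    have "contacts v = {n + 2, Suc (n + 2), Suc (Suc (n + 2))}"
      using contacts_rev[of v] m(2) n by (simp add: eval_nat_numeral insert_commute)
    then show ?thesis using n by (intro disjI2 exI[of _ "n + 2"]) simp
  qed
qed

lemma end_not_contact_if_second_not_first:
  assumes v: "v \<notin> set P" and "E v (P ! 1)" "\<not> E v (P ! 0)" and j: "l - 2 \<le> j" "j < l"
  shows "\<not> E v (P ! j)"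
proof -
  interpret rev: long_maximal_induced_path V E "rev P" by (rule rev_long_maximal_induced_path)
  have "l - 1 - j \<le> 1" using j by linarith
  then have "\<not> E v (rev P ! (l - 1 - j))"
    using rev.start_not_contact_if_second_last_not_last[of v] v assms(2,3) long by (simp add: rev_nth)
  then show ?thesis using j by (simp add: rev_nth)
qed

lemma complete_if_contacts_first_and_last_two:
  assumes v: "v \<notin> set P" and "E v (P ! 0)" "E v (P ! (l - 2))" "E v (P ! (l - 1))"
  shows "\<forall>i<l. E v (P ! i)"
proof -
  interpret rev: long_maximal_induced_path V E "rev P" by (rule rev_long_maximal_induced_path)
  have "E v (rev P ! 0)" "E v (rev P ! 1)" "E v (rev P ! (length (rev P) - 1))"
    using assms(2-) long by (simp_all add: rev_nth numeral_2_eq_2 flip: length_greater_0_conv)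
  then have rev_all: "\<forall>i<length (rev P). E v (rev P ! i)"
    using rev.complete_if_contacts_first_two_and_last[of v] v by simp
  show ?thesis
  proof (intro allI impI)
    fix i assume "i < l"
    then have "E v (rev P ! (l - 1 - i))" using rev_all by simp
    then show "E v (P ! i)" using \<open>i < l\<close> by (simp add: rev_nth)
  qed
qed

lemma contacts_cases_near_both_ends:
  assumes v: "v \<notin> set P" and i: "i \<in> contacts v" "i \<le> 1" and j: "j \<in> contacts v" "l \<le> j + 2"
    and not_all: "\<not> (\<forall>i<l. E v (P ! i))"
  shows "contacts v = {0, l - 1}"
proof -
  have vi: "E v (P ! i)" and vj: "E v (P ! j)" "j < l" using i j by (auto simp: contacts_def)
  have last: "E v (P ! (l - 1))"
  proof (rule ccontr)
    assume "\<not> E v (P ! (l - 1))"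
    then have "j = l - 2" using vj j(2) by (cases "j = l - 1") auto
    then show False
      using start_not_contact_if_second_last_not_last[OF v _ \<open>\<not> E v (P ! (l - 1))\<close> i(2)] vi vj
      by simp
  qed
  have first: "E v (P ! 0)"
  proof (rule ccontr)
    assume "\<not> E v (P ! 0)"
    then have "i = 1" using vi i(2) by (cases "i = 0") auto
    then show False using end_not_contact_if_second_not_first[OF v _ \<open>\<not> E v (P ! 0)\<close>] vi vj j(2)
      by simp
  qed
  have "\<not> E v (P ! 1)" "\<not> E v (P ! (l - 2))"
    using complete_if_contacts_first_two_and_last[OF v first _ last]
      complete_if_contacts_first_and_last_two[OF v first _ last] not_all by blast+
  then show ?thesis using contacts_eq_ends[OF v first last] by blast
qed

lemma mixed_contacts_cases:
  assumes v: "v \<notin> set P" and ne: "contacts v \<noteq> {}" and not_all: "\<not> (\<forall>i<l. E v (P ! i))"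
  shows "contacts v = {0, 1} \<or> contacts v = {l - 2, l - 1} \<or> contacts v = {0, l - 1}
    \<or> (\<exists>m. m + 2 < l \<and> contacts v = {m, Suc m, Suc (Suc m)})"
proof (cases "\<forall>i\<in>contacts v. i + 3 \<le> l")
  case True
  from contacts_cases_away_from_end[OF v ne True] show ?thesis
  proof (elim disjE exE conjE)
    fix m assume "m + 5 \<le> l" "contacts v = {m, Suc m, Suc (Suc m)}"
    then show ?thesis by (intro disjI2 exI[of _ m]) simp
  qed blast
next
  case False
  then obtain j where j: "j \<in> contacts v" "l \<le> j + 2" by (auto simp: not_le)
  show ?thesis
  proof (cases "\<forall>i\<in>contacts v. 2 \<le> i")
    case True
    then show ?thesis using contacts_cases_away_from_start[OF v ne] by blast
  next
    case False
    then obtain i where "i \<in> contacts v" "i \<le> 1" by (auto simp: not_le)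
    then show ?thesis using contacts_cases_near_both_ends[OF v _ _ j not_all] by blast
  qed
qed

section \<open>The core and its spanning path\<close>

definition complete_to_P :: "'a set" where
  "complete_to_P = {w. \<forall>i<l. E w (P ! i)}"

definition anticomplete_to_P :: "'a set" where
  "anticomplete_to_P = {r \<in> V. r \<notin> set P \<and> contacts r = {}}"

definition mixed_on_P :: "'a set" where
  "mixed_on_P = {v. v \<notin> set P \<and> contacts v \<noteq> {} \<and> v \<notin> complete_to_P}"

definition core :: "'a set" where
  "core = set P \<union> mixed_on_P"

lemma complete_adj_P: "w \<in> complete_to_P \<Longrightarrow> i < l \<Longrightarrow> E w (P ! i)"
  by (simp add: complete_to_P_def)

lemma complete_adj_start: "w \<in> complete_to_P \<Longrightarrow> E w (P ! 0) \<and> E w (P ! 1) \<and> E w (P ! 2)"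
  using long by (simp add: complete_to_P_def)

lemma anticomplete_not_adj_start: "r \<in> anticomplete_to_P \<Longrightarrow> \<not> E r (P ! 0) \<and> \<not> E r (P ! 2)"
  using long by (auto simp: anticomplete_to_P_def contacts_def)

lemma complete_in_V: "w \<in> complete_to_P \<Longrightarrow> w \<in> V"
  using complete_adj_P[of w 0] long adj_in_V(1) by fastforce

lemma anticomplete_not_adj_P: "r \<in> anticomplete_to_P \<Longrightarrow> i < l \<Longrightarrow> \<not> E r (P ! i)"
  by (auto simp: anticomplete_to_P_def contacts_def)

lemma anticomplete_notin_P: "r \<in> anticomplete_to_P \<Longrightarrow> r \<notin> set P"
  by (simp add: anticomplete_to_P_def)

lemma anticomplete_in_V: "r \<in> anticomplete_to_P \<Longrightarrow> r \<in> V"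
  by (simp add: anticomplete_to_P_def)

lemma mixed_notin_P: "v \<in> mixed_on_P \<Longrightarrow> v \<notin> set P"
  by (simp add: mixed_on_P_def)

lemma mixed_in_V: "v \<in> mixed_on_P \<Longrightarrow> v \<in> V"
  by (auto simp: mixed_on_P_def contacts_def dest: adj_in_V(1))

lemma vertex_cases:
  "x \<in> V \<Longrightarrow> x \<in> set P \<or> x \<in> complete_to_P \<or> x \<in> mixed_on_P \<or> x \<in> anticomplete_to_P"
  by (auto simp: mixed_on_P_def anticomplete_to_P_def)

lemma mixed_contacts:
  "v \<in> mixed_on_P \<Longrightarrow> contacts v = {0, 1} \<or> contacts v = {l - 2, l - 1} \<or> contacts v = {0, l - 1}
    \<or> (\<exists>m. m + 2 < l \<and> contacts v = {m, Suc m, Suc (Suc m)})"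
  by (rule mixed_contacts_cases) (auto simp: mixed_on_P_def complete_to_P_def)

lemma common_end_contact_adj:
  assumes "u \<notin> set P" "v \<notin> set P" "u \<noteq> v" and idx: "a < l" "e < l" "d < l"
    "e = Suc a \<or> a = Suc e" "d = Suc e \<or> e = Suc d" "a + 2 \<le> d \<or> d + 2 \<le> a"
    and "E u (P ! a)" "E v (P ! a)" "\<not> E u (P ! e)" "\<not> E v (P ! e)" "\<not> E u (P ! d)" "\<not> E v (P ! d)"
  shows "E u v"
proof (rule ccontr)
  assume "\<not> E u v"
  have "E (P ! a) (P ! e)" "E (P ! e) (P ! d)" using idx by (auto intro: P_adj)
  moreover have "\<not> E (P ! a) (P ! d)" "P ! a \<noteq> P ! d"
    using idx P_not_adj[of a d] by (auto simp: P_nth_eq_iff)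
  moreover have "P ! e \<noteq> u" "P ! e \<noteq> v" using assms(1,2) idx by auto
  ultimately show False
    using assms(10-) \<open>\<not> E u v\<close> \<open>u \<noteq> v\<close>
    by (intro no_induced_chair[of "P ! a" u v "P ! e" "P ! d"]) (simp_all add: adj_commute)
qed

lemma mixed_same_contacts_adj:
  assumes u: "u \<in> mixed_on_P" and v: "v \<in> mixed_on_P" and "u \<noteq> v" and same: "contacts u = contacts v"
  shows "E u v"
proof -
  have nP: "u \<notin> set P" "v \<notin> set P" using u v by (simp_all add: mixed_notin_P)
  obtain n where n: "l = n + 7" using long by (metis add.commute le_Suc_ex)
  have cu: "E u (P ! i) \<longleftrightarrow> i \<in> contacts u" and cv: "E v (P ! i) \<longleftrightarrow> i \<in> contacts u"
    if "i < l" for i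
    using that same by (simp_all add: contacts_iff)
  from mixed_contacts[OF u] show ?thesis
  proof (elim disjE exE conjE)
    assume "contacts u = {0, 1}"
    then show ?thesis
      using common_end_contact_adj[OF nP \<open>u \<noteq> v\<close>, of 1 2 3] cu[of 1] cu[of 2] cu[of 3]
        cv[of 1] cv[of 2] cv[of 3] n by simp
  next
    assume "contacts u = {l - 2, l - 1}"
    then show ?thesis
      using common_end_contact_adj[OF nP \<open>u \<noteq> v\<close>, of "n + 5" "n + 4" "n + 3"]
        cu[of "n + 5"] cu[of "n + 4"] cu[of "n + 3"] cv[of "n + 5"] cv[of "n + 4"] cv[of "n + 3"] n
      by simp
  next
    assume "contacts u = {0, l - 1}"
    then show ?thesis
      using common_end_contact_adj[OF nP \<open>u \<noteq> v\<close>, of 0 1 2] cu[of 0] cu[of 1] cu[of 2]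
        cv[of 0] cv[of 1] cv[of 2] n by simp
  next
    fix m assume m: "m + 2 < l" "contacts u = {m, Suc m, Suc (Suc m)}"
    show ?thesis
    proof (cases "m + 4 < l")
      case True
      then show ?thesis
        using common_end_contact_adj[OF nP \<open>u \<noteq> v\<close>, of "m + 2" "m + 3" "m + 4"] m
          cu[of "m + 2"] cu[of "m + 3"] cu[of "m + 4"] cv[of "m + 2"] cv[of "m + 3"] cv[of "m + 4"]
        by simp
    next
      case False
      then have "2 \<le> m" using n by simp
      then obtain k where k: "m = k + 2" by (metis add.commute le_Suc_ex)
      then show ?thesis
        using common_end_contact_adj[OF nP \<open>u \<noteq> v\<close>, of m "k + 1" k] m
          cu[of m] cu[of "k + 1"] cu[of k] cv[of m] cv[of "k + 1"] cv[of k]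
        by simp
    qed
  qed
qed

lemma complete_adj_if_contact_edge:
  assumes v: "v \<notin> set P" and w: "w \<in> complete_to_P" and idx: "a < l" "b < l" "c < l"
    "b = Suc a \<or> a = Suc b" "c + 2 \<le> a \<and> c + 2 \<le> b \<or> a + 2 \<le> c \<and> b + 2 \<le> c"
    and "E v (P ! a)" "\<not> E v (P ! b)" "\<not> E v (P ! c)"
  shows "E w v"
proof (rule ccontr)
  assume "\<not> E w v"
  have "E (P ! a) (P ! b)" using idx by (auto intro: P_adj)
  moreover have "\<not> E (P ! a) (P ! c)" "\<not> E (P ! c) (P ! b)"
    using idx P_not_adj[of a c] P_not_adj[of c b] by auto
  moreover have "E w (P ! a)" "E w (P ! b)" "E w (P ! c)" using w idx by (simp_all add: complete_adj_P)
  ultimately show False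
    using assms(8-) \<open>\<not> E w v\<close>
    by (intro no_induced_bull[of v "P ! a" w "P ! c" "P ! b"]) (simp_all add: adj_commute)
qed

lemma complete_adj_mixed:
  assumes w: "w \<in> complete_to_P" and v: "v \<in> mixed_on_P"
  shows "E w v"
proof -
  have nP: "v \<notin> set P" using v by (simp add: mixed_notin_P)
  obtain n where n: "l = n + 7" using long by (metis add.commute le_Suc_ex)
  have c: "E v (P ! i) \<longleftrightarrow> i \<in> contacts v" if "i < l" for i using that by (simp add: contacts_iff)
  from mixed_contacts[OF v] show ?thesis
  proof (elim disjE exE conjE)
    assume "contacts v = {0, 1}"
    then show ?thesis
      using complete_adj_if_contact_edge[OF nP w, of 1 2 4] c[of 1] c[of 2] c[of 4] n by simp
  next
    assume "contacts v = {l - 2, l - 1}"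
    then show ?thesis
      using complete_adj_if_contact_edge[OF nP w, of "n + 5" "n + 4" 0] c[of "n + 5"] c[of "n + 4"]
        c[of 0] n by simp
  next
    assume "contacts v = {0, l - 1}"
    then show ?thesis
      using complete_adj_if_contact_edge[OF nP w, of 0 1 3] c[of 0] c[of 1] c[of 3] n by simp
  next
    fix m assume m: "m + 2 < l" "contacts v = {m, Suc m, Suc (Suc m)}"
    have "m = 0 \<or> m = 1 \<or> m = 2 \<or> (\<exists>k. m = k + 3)" by presburger
    then consider "m = 0" | "m = 1" | "m = 2" | k where "m = k + 3" by blast
    then show ?thesis
    proof cases
      case 1
      then show ?thesis
        using complete_adj_if_contact_edge[OF nP w, of 2 3 5] m c[of 2] c[of 3] c[of 5] n by simp
    next
      case 2
      then show ?thesis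
        using complete_adj_if_contact_edge[OF nP w, of 1 0 4] m c[of 1] c[of 0] c[of 4] n by simp
    next
      case 3
      then show ?thesis
        using complete_adj_if_contact_edge[OF nP w, of 2 1 "n + 6"] m c[of 2] c[of 1] c[of "n + 6"] n
        by simp
    next
      case (4 k)
      then show ?thesis
        using complete_adj_if_contact_edge[OF nP w, of m "k + 2" 0] m c[of m] c[of "k + 2"] c[of 0] n
        by simp
    qed
  qed
qed

lemma anticomplete_not_adj_if_contact_edge:
  assumes v: "v \<notin> set P" and r: "r \<in> anticomplete_to_P" and idx: "i < l" "j < l" "k < l"
    "j = Suc i \<or> i = Suc j" "k = Suc i \<or> i = Suc k" "j \<noteq> k"
    and "E v (P ! i)" "\<not> E v (P ! j)"
  shows "\<not> E r v"
proof
  assume "E r v"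
  have path: "E (P ! i) (P ! j)" "E (P ! i) (P ! k)" "\<not> E (P ! j) (P ! k)" "P ! j \<noteq> P ! k"
    using idx P_not_adj[of j k] by (auto intro: P_adj simp: P_nth_eq_iff)
  have far: "\<not> E r (P ! i)" "\<not> E r (P ! j)" "\<not> E r (P ! k)"
    using anticomplete_not_adj_P[OF r] idx by simp_all
  have neq: "r \<noteq> P ! i" "v \<noteq> P ! j" using anticomplete_notin_P[OF r] v idx by auto
  show False
  proof (cases "E v (P ! k)")
    case True
    then show False using path far neq assms(9-) \<open>E r v\<close>
      by (intro no_induced_bull[of r v "P ! i" "P ! j" "P ! k"]) (simp_all add: adj_commute)
  next
    case False
    then show False using path far neq assms(9-) \<open>E r v\<close>
      by (intro no_induced_chair[of "P ! i" "P ! k" "P ! j" v r]) (simp_all add: adj_commute)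
  qed
qed

lemma anticomplete_not_adj_mixed:
  assumes r: "r \<in> anticomplete_to_P" and v: "v \<in> mixed_on_P"
  shows "\<not> E r v"
proof -
  have nP: "v \<notin> set P" using v by (simp add: mixed_notin_P)
  obtain n where n: "l = n + 7" using long by (metis add.commute le_Suc_ex)
  have c: "E v (P ! i) \<longleftrightarrow> i \<in> contacts v" if "i < l" for i using that by (simp add: contacts_iff)
  from mixed_contacts[OF v] show ?thesis
  proof (elim disjE exE conjE)
    assume "contacts v = {0, 1}"
    then show ?thesis
      using anticomplete_not_adj_if_contact_edge[OF nP r, of 1 2 0] c[of 1] c[of 2] n by simp
  next
    assume "contacts v = {l - 2, l - 1}"
    then show ?thesis
      using anticomplete_not_adj_if_contact_edge[OF nP r, of "n + 5" "n + 4" "n + 6"] c[of "n + 5"]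
        c[of "n + 4"] n by simp
  next
    assume A: "contacts v = {0, l - 1}"
    show ?thesis
    proof
      assume "E r v"
      have "E v (P ! 0)" "E v (P ! (n + 6))" "\<not> E v (P ! 1)" using A c[of 0] c[of 1] c[of "n + 6"] n
        by simp_all
      moreover have "\<not> E r (P ! 0)" "\<not> E r (P ! 1)" "\<not> E r (P ! (n + 6))"
        using r n anticomplete_not_adj_P by simp_all
      moreover have "E (P ! 0) (P ! 1)" "\<not> E (P ! (n + 6)) (P ! 0)" "\<not> E (P ! (n + 6)) (P ! 1)"
        using n P_adj[of 0 1] P_not_adj[of "n + 6" 0] P_not_adj[of "n + 6" 1] by simp_all
      moreover have "v \<noteq> P ! 1" "r \<noteq> P ! (n + 6)"
        using nP anticomplete_notin_P[OF r] n by auto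
      ultimately show False using \<open>E r v\<close>
        by (intro no_induced_chair[of v r "P ! (n + 6)" "P ! 0" "P ! 1"]) (simp_all add: adj_commute)
    qed
  next
    fix m assume m: "m + 2 < l" "contacts v = {m, Suc m, Suc (Suc m)}"
    show ?thesis
    proof (cases "m + 3 < l")
      case True
      then show ?thesis
        using anticomplete_not_adj_if_contact_edge[OF nP r, of "m + 2" "m + 3" "m + 1"] m
          c[of "m + 2"] c[of "m + 3"] by simp
    next
      case False
      then have "1 \<le> m" using n by simp
      then obtain k where k: "m = k + 1" by (metis add.commute le_Suc_ex)
      then show ?thesis
        using anticomplete_not_adj_if_contact_edge[OF nP r, of m k "m + 1"] m c[of m] c[of k] by simp
    qed
  qed
qed

lemma complete_adj_anticomplete_nbr:
  assumes r: "r \<in> anticomplete_to_P" and r': "r' \<in> anticomplete_to_P" and "E r r'"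
    and w: "w \<in> complete_to_P" and "E w r"
  shows "E w r'"
proof (rule ccontr)
  assume "\<not> E w r'"
  have w_P: "E w (P ! 0)" "E w (P ! 2)" using complete_adj_start[OF w] by simp_all
  have r_P: "\<not> E r (P ! 0)" "\<not> E r (P ! 2)" "\<not> E r' (P ! 0)" "\<not> E r' (P ! 2)"
    using anticomplete_not_adj_start[OF r] anticomplete_not_adj_start[OF r'] by simp_all
  have "\<not> E (P ! 0) (P ! 2)" "P ! 0 \<noteq> P ! 2"
    using long P_not_adj[of 0 2] P_nth_eq_iff[of 0 2] by simp_all
  moreover have "w \<noteq> r'" using w_P r_P by auto
  ultimately show False using w_P r_P assms(3,5) \<open>\<not> E w r'\<close>
    by (intro no_induced_chair[of w "P ! 0" "P ! 2" r r']) (simp_all add: adj_commute)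
qed

lemma complete_anticomplete_nbrs_subset:
  assumes u: "u \<in> complete_to_P" and w: "w \<in> complete_to_P" and "E u w"
    and r: "r \<in> anticomplete_to_P" and "E u r" "\<not> E w r"
  shows "anticomplete_to_P \<inter> {z. E w z} \<subseteq> anticomplete_to_P \<inter> {z. E u z}"
proof (intro subsetI IntI CollectI)
  fix r' assume r': "r' \<in> anticomplete_to_P \<inter> {z. E w z}"
  then show "r' \<in> anticomplete_to_P" by simp
  show "E u r'"
  proof (rule ccontr)
    assume "\<not> E u r'"
    have "\<not> E r r'"
      using complete_adj_anticomplete_nbr[of r' r w] r r' w \<open>\<not> E w r\<close> adj_sym by blast
    moreover have "E u (P ! 0)" "E w (P ! 0)"
      using complete_adj_start[OF u] complete_adj_start[OF w] by simp_all
    moreover have "\<not> E r (P ! 0)" "\<not> E r' (P ! 0)"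
      using anticomplete_not_adj_start[OF r] anticomplete_not_adj_start r' by simp_all
    ultimately show False using assms(3,5,6) r' \<open>\<not> E u r'\<close>
      by (intro no_induced_bull[of r u w r' "P ! 0"]) (simp_all add: adj_commute)
  qed
qed

lemma complete_adj_core: "w \<in> complete_to_P \<Longrightarrow> y \<in> core \<Longrightarrow> E w y"
  using complete_adj_P complete_adj_mixed by (auto simp: core_def in_set_conv_nth)

lemma core_nbr_outside_complete:
  assumes "y \<in> core" "z \<notin> core" "E y z"
  shows "z \<in> complete_to_P"
proof -
  have "z \<notin> anticomplete_to_P"
  proof
    assume z: "z \<in> anticomplete_to_P"
    show False
    proof (cases "y \<in> set P")
      case True
      then obtain i where "i < l" "y = P ! i" by (auto simp: in_set_conv_nth)
      then show False using anticomplete_not_adj_P[OF z] assms(3) adj_sym by blast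
    next
      case False
      then have "y \<in> mixed_on_P" using assms(1) by (simp add: core_def)
      then show False using anticomplete_not_adj_mixed[OF z] assms(3) adj_sym by blast
    qed
  qed
  then show ?thesis using vertex_cases[OF adj_in_V(2)[OF assms(3)]] assms(2) by (auto simp: core_def)
qed

text \<open>The spanning path of the core visits P in order and inserts, just before P ! k, the mixed
  vertices whose contacts form the window {k - 1, k, k + 1} (clipped to P); the mixed vertices with
  contacts {0, l - 1} come after the last vertex of P.\<close>

definition window :: "nat \<Rightarrow> nat set" where
  "window k = {i. i < l \<and> k \<le> Suc i \<and> i \<le> Suc k}"

lemma mem_window: "i \<in> window k \<longleftrightarrow> i < l \<and> k \<le> Suc i \<and> i \<le> Suc k"
  by (simp add: window_def)

lemma in_window_self: "k < l \<Longrightarrow> k \<in> window k"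
  by (simp add: mem_window)

lemma in_window_Suc: "Suc k < l \<Longrightarrow> k \<in> window (Suc k)"
  by (simp add: mem_window)

lemma window_inj:
  assumes "j < l" "k < l" "window j = window k"
  shows "j = k"
proof (rule ccontr)
  assume "j \<noteq> k"
  have "j \<in> window k" "k \<in> window j" using assms in_window_self by auto
  then have adj: "j = Suc k \<or> k = Suc j" using \<open>j \<noteq> k\<close> by (simp add: mem_window) arith
  have no_Suc: False if "b = Suc a" "b < l" "window a = window b" for a b
  proof (cases "Suc b < l")
    case True
    then have "Suc b \<in> window b" by (simp add: mem_window)
    then have "Suc b \<in> window a" using that(3) by simp
    then have "Suc b \<le> Suc a" by (simp add: mem_window)
    then show False using that(1) by simp
  next
    case False
    then have "a - 1 \<in> window a" "a - 1 \<notin> window b" using that(1,2) long by (auto simp: mem_window)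
    then show False using that(3) by simp
  qed
  show False using adj assms(3) no_Suc[of j k] no_Suc[of k j] assms(1,2) by auto
qed

lemma window_neq_ends: "window k \<noteq> {0, l - 1}"
proof
  assume "window k = {0, l - 1}"
  then have "0 \<in> window k" "l - 1 \<in> window k" by simp_all
  then show False using long by (simp add: mem_window)
qed

lemma mixed_contacts_window:
  assumes "v \<in> mixed_on_P"
  shows "(\<exists>k<l. contacts v = window k) \<or> contacts v = {0, l - 1}"
  using mixed_contacts[OF assms]
proof (elim disjE exE conjE)
  assume "contacts v = {0, 1}"
  moreover have "window 0 = {0, 1}" using long by (intro set_eqI) (simp add: mem_window, arith)
  moreover have "0 < l" using long by simp
  ultimately show ?thesis by blast
next
  assume "contacts v = {l - 2, l - 1}"
  moreover have "window (l - 1) = {l - 2, l - 1}" using long by (intro set_eqI) (simp add: mem_window, arith)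
  moreover have "l - 1 < l" using long by simp
  ultimately show ?thesis by blast
next
  fix m assume m: "m + 2 < l" "contacts v = {m, Suc m, Suc (Suc m)}"
  moreover have "window (Suc m) = {m, Suc m, Suc (Suc m)}"
    using m(1) by (intro set_eqI) (simp add: mem_window, arith)
  moreover have "Suc m < l" using m(1) by simp
  ultimately show ?thesis by blast
qed simp

definition mixed_with_contacts :: "nat set \<Rightarrow> 'a set" where
  "mixed_with_contacts S = {v \<in> mixed_on_P. contacts v = S}"

lemma exists_mixed_with_contacts_path:
  "\<exists>xs. set xs = mixed_with_contacts S \<and> distinct xs \<and> successively E xs"
proof -
  have "finite (mixed_with_contacts S)"
    using finite_V mixed_in_V by (auto simp: mixed_with_contacts_def intro: finite_subset)
  then obtain xs where xs: "set xs = mixed_with_contacts S" "distinct xs"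
    using finite_distinct_list by blast
  moreover have "successively E xs"
    using xs mixed_same_contacts_adj by (intro successively_if_pairwise) (auto simp: mixed_with_contacts_def)
  ultimately show ?thesis by blast
qed

definition mixed_path :: "nat set \<Rightarrow> 'a list" where
  "mixed_path S = (SOME xs. set xs = mixed_with_contacts S \<and> distinct xs \<and> successively E xs)"

lemma mixed_path:
  "set (mixed_path S) = mixed_with_contacts S" "distinct (mixed_path S)" "successively E (mixed_path S)"
  using someI_ex[OF exists_mixed_with_contacts_path[of S]] unfolding mixed_path_def by blast+

lemma mixed_path_adj: "v \<in> set (mixed_path S) \<Longrightarrow> i \<in> S \<Longrightarrow> i < l \<Longrightarrow> E v (P ! i)"
  by (auto simp: mixed_path(1) mixed_with_contacts_def contacts_def)

definition block :: "nat \<Rightarrow> 'a list" where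
  "block k = mixed_path (window k) @ [P ! k]"

lemma set_block: "set (block k) = insert (P ! k) (mixed_with_contacts (window k))"
  by (auto simp: block_def mixed_path(1))

lemma block_path:
  assumes k: "k < l"
  shows "successively E (block k) \<and> block k \<noteq> []"
proof -
  have "E (last (mixed_path (window k))) (P ! k)" if "mixed_path (window k) \<noteq> []"
    using mixed_path_adj[OF last_in_set[OF that] in_window_self[OF k] k] .
  then show ?thesis using mixed_path(3)[of "window k"] by (auto simp: block_def successively_append_iff)
qed

lemma block_link:
  assumes "Suc k < l"
  shows "E (last (block k)) (hd (block (Suc k)))"
proof (cases "mixed_path (window (Suc k)) = []")
  case True
  then show ?thesis using assms P_adj by (simp add: block_def)
next
  case False
  then show ?thesis
    using mixed_path_adj[OF hd_in_set[OF False] in_window_Suc[OF assms]] assms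
    by (simp add: block_def adj_commute)
qed

lemma disjoint_blocks:
  assumes "j < l" "k < l" "j \<noteq> k"
  shows "set (block j) \<inter> set (block k) = {}"
proof -
  have "mixed_with_contacts (window j) \<inter> mixed_with_contacts (window k) = {}"
    using window_inj[OF assms(1,2)] assms(3) by (auto simp: mixed_with_contacts_def)
  moreover have "P ! j \<noteq> P ! k" using assms P_nth_eq_iff by simp
  ultimately show ?thesis
    using assms by (auto simp: set_block mixed_with_contacts_def mixed_on_P_def)
qed

lemma distinct_blocks: "distinct (concat (map block [0..<l]))"
proof (rule distinct_concat)
  have "inj_on block {0..<l}"
    by (rule inj_onI) (simp add: block_def P_nth_eq_iff)
  then show "distinct (map block [0..<l])" by (simp add: distinct_map)
  show "distinct ys" if "ys \<in> set (map block [0..<l])" for ys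
    using that mixed_path(1,2) by (auto simp: block_def mixed_with_contacts_def mixed_on_P_def)
  fix ys zs assume "ys \<in> set (map block [0..<l])" "zs \<in> set (map block [0..<l])" "ys \<noteq> zs"
  then obtain j k where "j < l" "k < l" "ys = block j" "zs = block k" by auto
  moreover from this have "j \<noteq> k" using \<open>ys \<noteq> zs\<close> by auto
  ultimately show "set ys \<inter> set zs = {}" using disjoint_blocks by simp
qed

definition core_path :: "'a list" where
  "core_path = concat (map block [0..<l]) @ mixed_path {0, l - 1}"

lemma set_core_path: "set core_path = core"
proof
  show "set core_path \<subseteq> core"
    by (auto simp: core_path_def set_block mixed_path(1) mixed_with_contacts_def core_def)
  show "core \<subseteq> set core_path"
  proof
    fix x assume "x \<in> core"
    then consider (path) i where "i < l" "x = P ! i" | (mixed) "x \<in> mixed_on_P"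
      by (auto simp: core_def in_set_conv_nth)
    then show "x \<in> set core_path"
    proof cases
      case path
      then show ?thesis by (auto simp: core_path_def set_block)
    next
      case mixed
      then show ?thesis
        using mixed_contacts_window[OF mixed]
        by (auto simp: core_path_def set_block mixed_path(1) mixed_with_contacts_def)
    qed
  qed
qed

lemma is_path_core_path: "is_path V E core_path"
proof -
  define B where "B = concat (map block [0..<l])"
  have "[0..<l] = [0..<l - 1] @ [l - 1]" using upt_Suc_append[of 0 "l - 1"] long by simp
  then have last_B: "last B = P ! (l - 1)" by (simp add: B_def block_def)
  have "successively E B"
    unfolding B_def using block_path block_link
    by (intro successively_concat) (auto simp: successively_map successively_conv_nth)
  moreover have "E (P ! (l - 1)) (hd (mixed_path {0, l - 1}))" if "mixed_path {0, l - 1} \<noteq> []"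
    using mixed_path_adj[OF hd_in_set[OF that], of "l - 1"] long by (simp add: adj_commute)
  ultimately have "successively E core_path"
    using mixed_path(3) last_B by (auto simp: core_path_def B_def[symmetric] successively_append_iff)
  moreover have "set B \<inter> set (mixed_path {0, l - 1}) = {}"
    using window_neq_ends
    by (auto simp: B_def set_block mixed_path(1) mixed_with_contacts_def mixed_on_P_def)
  then have "distinct core_path"
    using distinct_blocks mixed_path(2) by (simp add: core_path_def B_def)
  moreover have "core_path \<noteq> []" using block_path[of 0] long by (auto simp: core_path_def)
  moreover have "core \<subseteq> V" using P_nth_in_V mixed_in_V by (auto simp: core_def in_set_conv_nth)
  ultimately show ?thesis using set_core_path by (simp add: is_path_iff_successively)
qed

lemma longest_path_meeting_core_contains_core:
  assumes "longest_path V E Q" "set Q \<inter> core \<noteq> {}"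
  shows "core \<subseteq> set Q"
  using longest_path_contains_traceable_set[OF assms(1) is_path_core_path] assms(2) set_core_path
    core_nbr_outside_complete complete_adj_core by blast

section \<open>Longest paths avoiding the core\<close>

lemma complete_adj_anticomplete_path:
  "successively E xs \<Longrightarrow> set xs \<subseteq> anticomplete_to_P \<Longrightarrow> w \<in> complete_to_P \<Longrightarrow> xs \<noteq> [] \<Longrightarrow>
    E w (last xs) \<Longrightarrow> \<forall>z\<in>set xs. E w z"
proof (induction xs rule: induct_list012)
  case (3 a b xs)
  have "successively E (b # xs)" "set (b # xs) \<subseteq> anticomplete_to_P" "E w (last (b # xs))"
    using "3.prems" by (simp_all add: successively_Cons)
  then have "\<forall>z\<in>set (b # xs). E w z" using "3.IH"(2) "3.prems"(3) by blast
  moreover have "E w a"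
    using complete_adj_anticomplete_nbr[of b a w] "3.prems" calculation by (simp add: adj_commute)
  ultimately show ?case by simp
qed simp_all

lemma anticomplete_has_complete_nbr:
  assumes conn: "connected_graph V E" and r: "r \<in> anticomplete_to_P"
  shows "\<exists>w\<in>complete_to_P. E w r"
proof -
  obtain q where q: "is_path V E q" "hd q = r" "last q = P ! 0"
    using conn anticomplete_in_V[OF r] P_nth_in_V[of 0] long unfolding connected_graph_def by auto
  have "\<exists>x\<in>set q. x \<notin> anticomplete_to_P"
    using q anticomplete_notin_P by (metis is_path_def last_in_set nth_mem P_not_Nil length_greater_0_conv)
  then obtain A x B where split: "q = A @ x # B" and x: "x \<notin> anticomplete_to_P"
    and A: "\<forall>a\<in>set A. a \<in> anticomplete_to_P"
    using split_list_first_prop[of q "\<lambda>x. x \<notin> anticomplete_to_P"] by blast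
  have "A \<noteq> []" using q(2) r x split by auto
  have succ: "successively E A" "E (last A) x"
    using q(1) split \<open>A \<noteq> []\<close> by (auto simp: is_path_iff_successively successively_append_iff)
  have last_A: "last A \<in> anticomplete_to_P" using A \<open>A \<noteq> []\<close> by simp
  have "x \<notin> set P"
  proof
    assume "x \<in> set P"
    then obtain i where "i < l" "x = P ! i" by (auto simp: in_set_conv_nth)
    then show False using anticomplete_not_adj_P[OF last_A] succ(2) by simp
  qed
  moreover have "x \<notin> mixed_on_P" using anticomplete_not_adj_mixed[OF last_A] succ(2) by blast
  moreover have "x \<in> V" using q(1) split by (auto simp: is_path_def)
  ultimately have w: "x \<in> complete_to_P" using vertex_cases x by blast
  have "\<forall>z\<in>set A. E x z"
    using complete_adj_anticomplete_path[OF succ(1) _ w \<open>A \<noteq> []\<close>] A succ(2) adj_sym by blast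
  moreover have "r \<in> set A" using q(2) split \<open>A \<noteq> []\<close> by (cases A) auto
  ultimately show ?thesis using w by blast
qed

lemma first_two_of_P: "P ! 0 \<in> core" "P ! 1 \<in> core" "P ! 0 \<in> V" "P ! 1 \<in> V" "E (P ! 1) (P ! 0)"
  "P ! 1 \<noteq> P ! 0"
  using long P_nth_in_V[of 0] P_nth_in_V[of 1] P_adj[of 1 0] P_nth_eq_iff[of 1 0]
  by (simp_all add: core_def)

lemma core_avoiding_vertex_cases:
  assumes "is_path V E Q" "set Q \<inter> core = {}" "x \<in> set Q"
  shows "x \<in> complete_to_P \<or> x \<in> anticomplete_to_P"
  using vertex_cases[of x] assms by (auto simp: is_path_def core_def)

lemma longest_path_contains_complete_nbr_of_anticomplete_edge:
  assumes Q: "longest_path V E (xs @ a # b # ys)" and ab: "a \<in> anticomplete_to_P" "b \<in> anticomplete_to_P"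
    and w: "w \<in> complete_to_P" "E w a \<or> E w b"
  shows "w \<in> set (xs @ a # b # ys)"
proof -
  have "E a b" using Q by (auto simp: longest_path_def is_path_iff_successively successively_append_iff)
  have "E w a \<and> E w b"
  proof (cases "E w a")
    case True
    then show ?thesis using complete_adj_anticomplete_nbr[OF ab \<open>E a b\<close> w(1)] by simp
  next
    case False
    then have "E w b" using w(2) by simp
    then show ?thesis using complete_adj_anticomplete_nbr[OF ab(2,1) adj_sym[OF \<open>E a b\<close>] w(1)] by simp
  qed
  then show ?thesis
    using longest_path_contains_common_nbr[OF Q complete_in_V[OF w(1)]] by (simp add: adj_commute)
qed

lemma core_avoiding_longest_path_meets_complete:
  assumes conn: "connected_graph V E" and Q: "longest_path V E Q" and avoid: "set Q \<inter> core = {}"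
  shows "\<exists>s\<in>set Q. s \<in> complete_to_P"
proof (rule ccontr)
  assume none: "\<not> (\<exists>s\<in>set Q. s \<in> complete_to_P)"
  have Qp: "is_path V E Q" using Q by (simp add: longest_path_def)
  then have "Q \<noteq> []" by (simp add: is_path_def)
  then have "last Q \<in> anticomplete_to_P"
    using core_avoiding_vertex_cases[OF Qp avoid] none by auto
  then obtain w where w: "w \<in> complete_to_P" "E w (last Q)"
    using anticomplete_has_complete_nbr[OF conn] by blast
  have "Q = butlast Q @ [last Q]" using \<open>Q \<noteq> []\<close> by simp
  then have "w \<in> set Q"
    using longest_path_contains_nbr_of_last[of V E "butlast Q" "last Q" w] Q complete_in_V[OF w(1)] w(2)
    by (simp add: adj_commute)
  then show False using none w(1) by blast
qed

lemma core_avoiding_longest_path_split: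
  assumes conn: "connected_graph V E" and Q: "longest_path V E Q" and avoid: "set Q \<inter> core = {}"
  obtains A x x' s y B where "Q = A @ x # x' # s # y # B"
    "set (A @ [x, x']) \<subseteq> anticomplete_to_P" "s \<in> complete_to_P" "y \<in> anticomplete_to_P"
proof -
  have Qp: "is_path V E Q" using Q by (simp add: longest_path_def)
  obtain C s D where Q_eq: "Q = C @ s # D" and s: "s \<in> complete_to_P"
    and C: "\<forall>c\<in>set C. c \<notin> complete_to_P"
    using split_list_first_prop[of Q "\<lambda>s. s \<in> complete_to_P"]
      core_avoiding_longest_path_meets_complete[OF conn Q avoid] by blast
  have C_anti: "set C \<subseteq> anticomplete_to_P"
    using C core_avoiding_vertex_cases[OF Qp avoid] Q_eq by auto
  have start_off_Q: "P ! 0 \<notin> set Q" "P ! 1 \<notin> set Q" using avoid first_two_of_P by auto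
  have "2 \<le> length C"
  proof (rule ccontr)
    assume "\<not> 2 \<le> length C"
    have "is_path V E (P ! 1 # P ! 0 # s # D)"
      using Qp start_off_Q first_two_of_P complete_adj_start[OF s]
      by (auto simp: Q_eq is_path_iff_successively successively_append_iff adj_commute)
    from longest_path_length_ge[OF Q this] show False
      using \<open>\<not> 2 \<le> length C\<close> by (simp add: Q_eq)
  qed
  then obtain k where "length C = Suc (Suc k)" by (metis add_2_eq_Suc le_Suc_ex)
  then obtain ys x' where "C = ys @ [x']" "length ys = Suc k" by (auto simp: length_Suc_conv_rev)
  moreover from this obtain A x where "ys = A @ [x]" by (auto simp: length_Suc_conv_rev)
  ultimately have C_eq: "C = A @ [x, x']" by simp
  have "D \<noteq> []"
  proof
    assume "D = []"
    then have "P ! 0 \<in> set Q"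
      using longest_path_contains_nbr_of_last[of V E C s "P ! 0"] Q Q_eq first_two_of_P complete_adj_start[OF s]
      by simp
    then show False using start_off_Q by simp
  qed
  then obtain y B where D_eq: "D = y # B" by (cases D) auto
  have "y \<notin> complete_to_P"
  proof
    assume "y \<in> complete_to_P"
    then have "P ! 0 \<in> set Q"
      using longest_path_contains_common_nbr[of V E C s y B "P ! 0"] Q Q_eq D_eq first_two_of_P
        complete_adj_start[OF s] complete_adj_start[of y] by (simp add: adj_commute)
    then show False using start_off_Q by simp
  qed
  then have "y \<in> anticomplete_to_P" using core_avoiding_vertex_cases[OF Qp avoid] Q_eq D_eq by auto
  then show ?thesis using that Q_eq C_eq D_eq C_anti s by simp
qed

lemma longest_path_contains_complete_nbr_after_split:
  assumes Q: "longest_path V E (A @ s # y # B)" and avoid: "set (A @ s # y # B) \<inter> core = {}"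
    and s: "s \<in> complete_to_P" and y: "y \<in> anticomplete_to_P" and w: "w \<in> complete_to_P" "E w y"
  shows "w \<in> set (A @ s # y # B)"
proof (cases B)
  case Nil
  then show ?thesis
    using longest_path_contains_nbr_of_last[of V E "A @ [s]" y w] Q complete_in_V[OF w(1)] w(2)
    by (simp add: adj_commute)
next
  case (Cons y' B')
  have Qp: "is_path V E (A @ s # y # y' # B')" using Q Cons by (simp add: longest_path_def)
  have "y' \<in> complete_to_P \<or> y' \<in> anticomplete_to_P"
    using core_avoiding_vertex_cases[OF Qp] avoid Cons by simp
  then show ?thesis
  proof
    assume y': "y' \<in> anticomplete_to_P"
    show ?thesis
      using longest_path_contains_complete_nbr_of_anticomplete_edge[of "A @ [s]" y y' B' w] Q Cons y y' w
      by simp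
  next
    assume y': "y' \<in> complete_to_P"
    have "is_path V E (A @ s # P ! 0 # P ! 1 # y' # B')"
      using Qp avoid Cons first_two_of_P complete_adj_start[OF s] complete_adj_start[OF y']
      by (auto simp: is_path_iff_successively successively_append_iff adj_commute)
    from longest_path_length_ge[OF Q this] show ?thesis using Cons by simp
  qed
qed

lemma first_complete_nbrs_not_adj:
  assumes Q: "longest_path V E (C @ s # y # B)" and avoid: "set (C @ s # y # B) \<inter> core = {}"
    and C: "C \<noteq> []" "set C \<subseteq> anticomplete_to_P" and s: "s \<in> complete_to_P"
  shows "\<not> E (last C) y"
proof
  assume "E (last C) y"
  have Qp: "is_path V E (C @ s # y # B)" using Q by (simp add: longest_path_def)
  then have succ: "successively E C" "E (last C) s" "successively E (y # B)"
    using C(1) by (auto simp: is_path_iff_successively successively_append_iff)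
  then have "\<forall>z\<in>set C. E s z"
    using complete_adj_anticomplete_path[OF succ(1) C(2) s C(1)] adj_sym by blast
  then have "E s (hd C)" using C(1) by simp
  then have "successively E ((P ! 1 # P ! 0 # s # C) @ y # B)"
    using succ \<open>E (last C) y\<close> C(1) first_two_of_P(5) complete_adj_start[OF s]
    by (subst successively_append_iff) (simp add: successively_Cons adj_commute)
  moreover have "distinct ((P ! 1 # P ! 0 # s # C) @ y # B)" "set ((P ! 1 # P ! 0 # s # C) @ y # B) \<subseteq> V"
    using Qp avoid first_two_of_P by (auto simp: is_path_def)
  ultimately have "is_path V E ((P ! 1 # P ! 0 # s # C) @ y # B)"
    by (simp add: is_path_iff_successively)
  from longest_path_length_ge[OF Q this] show False by simp
qed

lemma core_avoiding_longest_path_contains_max_complete: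
  assumes conn: "connected_graph V E" and Q: "longest_path V E Q" and avoid: "set Q \<inter> core = {}"
    and w: "w \<in> complete_to_P"
    and max: "\<And>u. u \<in> complete_to_P \<Longrightarrow>
      card (anticomplete_to_P \<inter> {z. E u z}) \<le> card (anticomplete_to_P \<inter> {z. E w z})"
  shows "w \<in> set Q"
proof (rule ccontr)
  assume "w \<notin> set Q"
  obtain A x x' s y B where Q_eq: "Q = A @ x # x' # s # y # B"
    and anti: "set (A @ [x, x']) \<subseteq> anticomplete_to_P" and s: "s \<in> complete_to_P"
    and y: "y \<in> anticomplete_to_P"
    using core_avoiding_longest_path_split[OF conn Q avoid] by blast
  have Qp: "is_path V E Q" using Q by (simp add: longest_path_def)
  have x': "x' \<in> anticomplete_to_P" "E x' s" "E s y" "x' \<noteq> y"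
    using Qp anti by (auto simp: Q_eq is_path_iff_successively successively_append_iff)
  have not_x': "\<not> E w x'"
    using longest_path_contains_complete_nbr_of_anticomplete_edge[of A x x' "s # y # B" w]
      Q anti w \<open>w \<notin> set Q\<close> by (auto simp: Q_eq)
  have not_y: "\<not> E w y"
    using longest_path_contains_complete_nbr_after_split[of "A @ [x, x']" s y B w]
      Q avoid s y w \<open>w \<notin> set Q\<close> by (auto simp: Q_eq)
  show False
  proof (cases "E s w")
    case True
    have "anticomplete_to_P \<inter> {z. E w z} \<subseteq> anticomplete_to_P \<inter> {z. E s z}"
      using complete_anticomplete_nbrs_subset[OF s w True x'(1) adj_sym[OF x'(2)] not_x'] .
    moreover have "x' \<in> anticomplete_to_P \<inter> {z. E s z}" "x' \<notin> anticomplete_to_P \<inter> {z. E w z}"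
      using x' not_x' adj_sym by auto
    ultimately have "anticomplete_to_P \<inter> {z. E w z} \<subset> anticomplete_to_P \<inter> {z. E s z}" by blast
    moreover have "finite (anticomplete_to_P \<inter> {z. E s z})"
      using finite_V anticomplete_in_V by (blast intro: finite_subset)
    ultimately show False using psubset_card_mono max[OF s] by (metis not_le)
  next
    case not_sw: False
    have "\<not> E x' y"
      using first_complete_nbrs_not_adj[of "A @ [x, x']" s y B] Q avoid anti s by (simp add: Q_eq)
    moreover have "\<not> E x' (P ! 0)" "\<not> E y (P ! 0)"
      using anticomplete_not_adj_start x'(1) y by simp_all
    moreover have "E s (P ! 0)" "E w (P ! 0)" using complete_adj_start s w by simp_all
    moreover have "s \<noteq> w" using \<open>w \<notin> set Q\<close> by (auto simp: Q_eq)
    ultimately show False using x' not_x' not_y not_sw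
      by (intro no_induced_chair[of s x' y "P ! 0" w]) (simp_all add: adj_commute)
  qed
qed

lemma core_avoiding_transversal:
  assumes conn: "connected_graph V E"
  obtains T where "T \<subseteq> V" "card T \<le> 1"
    "\<And>Q. longest_path V E Q \<Longrightarrow> set Q \<inter> core = {} \<Longrightarrow> T \<inter> set Q \<noteq> {}"
proof (cases "complete_to_P = {}")
  case True
  then show ?thesis
    using that[of "{}"] core_avoiding_longest_path_meets_complete[OF conn] by auto
next
  case False
  let ?deg = "\<lambda>u. card (anticomplete_to_P \<inter> {z. E u z})"
  have fin: "finite (?deg ` complete_to_P)"
    using finite_V complete_in_V by (blast intro: finite_subset finite_imageI)
  then have "Max (?deg ` complete_to_P) \<in> ?deg ` complete_to_P" using False by (intro Max_in) auto
  then obtain w where w: "w \<in> complete_to_P" "?deg w = Max (?deg ` complete_to_P)" by auto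
  have "?deg u \<le> ?deg w" if "u \<in> complete_to_P" for u
    using Max_ge[OF fin] that w(2) by simp
  then show ?thesis
    using that[of "{w}"] w(1) complete_in_V core_avoiding_longest_path_contains_max_complete[OF conn]
    by auto
qed

end

theorem lemma3p7:
  fixes V :: "'a set" and E :: "'a \<Rightarrow> 'a \<Rightarrow> bool" and P :: "'a list"
  assumes "graph V E" and "connected_graph V E" and "bull_chair_free V E"
    and "maximal_induced_path V E P" and "length P \<ge> 7"
  shows "lpt V E \<le> 2"
proof -
  interpret long_maximal_induced_path V E P
    using assms by (unfold_locales) auto
  obtain T where T: "T \<subseteq> V" "card T \<le> 1"
    "\<And>Q. longest_path V E Q \<Longrightarrow> set Q \<inter> core = {} \<Longrightarrow> T \<inter> set Q \<noteq> {}"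
    using core_avoiding_transversal[OF assms(2)] by blast
  have "lp_transversal V E (insert (P ! 0) T)"
    unfolding lp_transversal_def
    using T first_two_of_P longest_path_meeting_core_contains_core by blast
  then have "lpt V E \<le> card (insert (P ! 0) T)" by (rule lpt_le_card[OF assms(1)])
  also have "\<dots> \<le> Suc (card T)" using finite_subset[OF T(1) finite_V] by (simp add: card_insert_if)
  also have "\<dots> \<le> 2" using T(2) by simp
  finally show ?thesis .
qed

end
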